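(* Let $\rho$ be a probability distribution on $\mathbb{R}^d\times\mathbb{R}$ with $\mathbb{E}\|a\|^2<\infty$, $H=\mathbb{E}[aa^\top]$ invertible with largest eigenvalue $L$. Assume there are finite constants $R,\tilde\kappa$ with $\mathbb{E}[\|a\|^2aa^\top]\preccurlyeq R^2H$ and $\mathbb{E}[\|a\|^2_{H^{-1}}aa^\top]\preccurlyeq\tilde\kappa H$, and let $\alpha,\beta>0$ satisfy $(\alpha+2\beta)R^2\le1$ and $\alpha\le\frac{\beta}{2\tilde\kappa}$. With the operators defined in the context: (a) if $0<\alpha,\beta<1/L$, then $(\mathcal{I}-\tilde{\mathcal{T}})^{-1}$ exists; (b) $\mathcal{M}\circ(\mathcal{I}-\tilde{\mathcal{T}})^{-1}\circ\mathcal{N}\preccurlyeq\frac23\mathcal{N}$, and $(\mathcal{I}-\mathcal{T})^{-1}\circ\mathcal{N}$ exists; (c) $\mathcal{M}^\top\circ(\mathcal{I}-\tilde{\mathcal{T}}^\top)^{-1}\circ\Upsilon\preccurlyeq\frac23\Upsilon$.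
   Context: $\preccurlyeq$ is the Loewner order, $\|a\|^2_{H^{-1}}=a^\top H^{-1}a$. For $a$ distributed as the marginal of $\rho$, let $\mathcal{J}=\begin{bmatrix} I-\beta aa^\top & I-\beta aa^\top\\ -\alpha aa^\top & I-\alpha aa^\top\end{bmatrix}$ and $A=\mathbb{E}[\mathcal{J}]=\begin{bmatrix}I-\beta H&I-\beta H\\-\alpha H&I-\alpha H\end{bmatrix}$. For $2d\times2d$ matrices $\Theta$ define the linear operators $\mathcal{T}(\Theta)=\mathbb{E}[\mathcal{J}\Theta\mathcal{J}^\top]$, $\tilde{\mathcal{T}}(\Theta)=A\Theta A^\top$, $\mathcal{M}(\Theta)=\mathbb{E}[(\mathcal{J}-A)\Theta(\mathcal{J}-A)^\top]$, and their transposes $\tilde{\mathcal{T}}^\top(\Theta)=A^\top\Theta A$, $\mathcal{M}^\top(\Theta)=\mathbb{E}[(\mathcal{J}-A)^\top\Theta(\mathcal{J}-A)]$; $\mathcal{I}$ is the identity operator, $\circ$ denotes composition/application, and "$(\mathcal{I}-\mathcal{T})^{-1}\circ\mathcal{N}$ exists" means the series $\sum_{t\ge0}\mathcal{T}^t(\mathcal{N})$ converges. Also $\Upsilon=\begin{bmatrix}H&H\\H&H\end{bmatrix}$ and $\mathcal{N}=\begin{bmatrix}\beta^2H&\alpha\beta H\\ \alpha\beta H&\alpha^2H\end{bmatrix}$. *)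

theory Defs
  imports "HOL-Probability.Probability"
begin

definition outer :: "real^'d \<Rightarrow> real^'d^'d" where
  "outer a = (\<chi> i j. a$i * a$j)"

definition loewner_le :: "real^'n^'n \<Rightarrow> real^'n^'n \<Rightarrow> bool" where
  "loewner_le A B \<longleftrightarrow> (\<forall>x. x \<bullet> (A *v x) \<le> x \<bullet> (B *v x))"

definition blockm :: "real^'d^'d \<Rightarrow> real^'d^'d \<Rightarrow> real^'d^'d \<Rightarrow> real^'d^'d
    \<Rightarrow> real^('d+'d)^('d+'d)" where
  "blockm P Q R S = (\<chi> i j. case i of
      Inl i' \<Rightarrow> (case j of Inl j' \<Rightarrow> P$i'$j' | Inr j' \<Rightarrow> Q$i'$j')
    | Inr i' \<Rightarrow> (case j of Inl j' \<Rightarrow> R$i'$j' | Inr j' \<Rightarrow> S$i'$j'))"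

definition Hmat :: "((real^'d) \<times> real) measure \<Rightarrow> real^'d^'d" where
  "Hmat \<rho> = integral\<^sup>L \<rho> (\<lambda>z. outer (fst z))"

definition Jmat :: "real \<Rightarrow> real \<Rightarrow> real^'d \<Rightarrow> real^('d+'d)^('d+'d)" where
  "Jmat \<alpha> \<beta> a = blockm (mat 1 - \<beta> *\<^sub>R outer a) (mat 1 - \<beta> *\<^sub>R outer a)
                        (- (\<alpha> *\<^sub>R outer a)) (mat 1 - \<alpha> *\<^sub>R outer a)"

definition Amat :: "((real^'d) \<times> real) measure \<Rightarrow> real \<Rightarrow> real \<Rightarrow> real^('d+'d)^('d+'d)" where
  "Amat \<rho> \<alpha> \<beta> = blockm (mat 1 - \<beta> *\<^sub>R Hmat \<rho>) (mat 1 - \<beta> *\<^sub>R Hmat \<rho>)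
                        (- (\<alpha> *\<^sub>R Hmat \<rho>)) (mat 1 - \<alpha> *\<^sub>R Hmat \<rho>)"

definition Top :: "((real^'d) \<times> real) measure \<Rightarrow> real \<Rightarrow> real \<Rightarrow>
    real^('d+'d)^('d+'d) \<Rightarrow> real^('d+'d)^('d+'d)" where
  "Top \<rho> \<alpha> \<beta> \<Theta> = integral\<^sup>L \<rho> (\<lambda>z. Jmat \<alpha> \<beta> (fst z) ** \<Theta> ** transpose (Jmat \<alpha> \<beta> (fst z)))"

definition Ttil :: "((real^'d) \<times> real) measure \<Rightarrow> real \<Rightarrow> real \<Rightarrow>
    real^('d+'d)^('d+'d) \<Rightarrow> real^('d+'d)^('d+'d)" where
  "Ttil \<rho> \<alpha> \<beta> \<Theta> = Amat \<rho> \<alpha> \<beta> ** \<Theta> ** transpose (Amat \<rho> \<alpha> \<beta>)"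

definition TtilT :: "((real^'d) \<times> real) measure \<Rightarrow> real \<Rightarrow> real \<Rightarrow>
    real^('d+'d)^('d+'d) \<Rightarrow> real^('d+'d)^('d+'d)" where
  "TtilT \<rho> \<alpha> \<beta> \<Theta> = transpose (Amat \<rho> \<alpha> \<beta>) ** \<Theta> ** Amat \<rho> \<alpha> \<beta>"

definition Mop :: "((real^'d) \<times> real) measure \<Rightarrow> real \<Rightarrow> real \<Rightarrow>
    real^('d+'d)^('d+'d) \<Rightarrow> real^('d+'d)^('d+'d)" where
  "Mop \<rho> \<alpha> \<beta> \<Theta> = integral\<^sup>L \<rho> (\<lambda>z.
      (Jmat \<alpha> \<beta> (fst z) - Amat \<rho> \<alpha> \<beta>) ** \<Theta> ** transpose (Jmat \<alpha> \<beta> (fst z) - Amat \<rho> \<alpha> \<beta>))"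

definition MopT :: "((real^'d) \<times> real) measure \<Rightarrow> real \<Rightarrow> real \<Rightarrow>
    real^('d+'d)^('d+'d) \<Rightarrow> real^('d+'d)^('d+'d)" where
  "MopT \<rho> \<alpha> \<beta> \<Theta> = integral\<^sup>L \<rho> (\<lambda>z.
      transpose (Jmat \<alpha> \<beta> (fst z) - Amat \<rho> \<alpha> \<beta>) ** \<Theta> ** (Jmat \<alpha> \<beta> (fst z) - Amat \<rho> \<alpha> \<beta>))"

definition Upsilon :: "((real^'d) \<times> real) measure \<Rightarrow> real^('d+'d)^('d+'d)" where
  "Upsilon \<rho> = blockm (Hmat \<rho>) (Hmat \<rho>) (Hmat \<rho>) (Hmat \<rho>)"

definition Nmat :: "((real^'d) \<times> real) measure \<Rightarrow> real \<Rightarrow> real \<Rightarrow> real^('d+'d)^('d+'d)" where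
  "Nmat \<rho> \<alpha> \<beta> = blockm ((\<beta>^2) *\<^sub>R Hmat \<rho>) ((\<alpha>*\<beta>) *\<^sub>R Hmat \<rho>)
                          ((\<alpha>*\<beta>) *\<^sub>R Hmat \<rho>) ((\<alpha>^2) *\<^sub>R Hmat \<rho>)"

text \<open>(I - S)^{-1} exists (as Neumann series) and its value on \<Theta>.\<close>
definition inv_exists :: "(('a::real_normed_vector) \<Rightarrow> 'a) \<Rightarrow> bool" where
  "inv_exists S \<longleftrightarrow> (\<forall>\<Theta>. summable (\<lambda>t. (S ^^ t) \<Theta>))"

definition inv_on_exists :: "(('a::real_normed_vector) \<Rightarrow> 'a) \<Rightarrow> 'a \<Rightarrow> bool" where
  "inv_on_exists S \<Theta> \<longleftrightarrow> summable (\<lambda>t. (S ^^ t) \<Theta>)"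

definition inv_apply :: "(('a::real_normed_vector) \<Rightarrow> 'a) \<Rightarrow> 'a \<Rightarrow> 'a" where
  "inv_apply S \<Theta> = (\<Sum>t. (S ^^ t) \<Theta>)"

end

theory Submission
  imports Defs
begin

text \<open>The blocks of \<open>A\<close> are polynomials in \<open>H\<close>, so by Cayley--Hamilton every block of an orbit
  \<open>A\<^sup>t y\<close> or \<open>(A\<^sup>T)\<^sup>t y\<close> satisfies \<open>x(t+2) = (2 - (\<alpha> + \<beta>) H) x(t+1) - (1 - \<beta> H) x(t)\<close>.
  An explicit quadratic Lyapunov function \<open>V\<close> decreases along this recursion by at least
  \<open>x(t)\<^sup>T H x(t)\<close>, so \<open>\<Sum>\<^sub>t x(t)\<^sup>T H x(t) \<le> V(x(0), x(1))\<close>. As \<open>H\<close> is positive definite, the orbits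
  are square summable, hence every Neumann series of \<open>\<Theta> \<mapsto> A \<Theta> A\<^sup>T\<close> and of \<open>\<Theta> \<mapsto> A\<^sup>T \<Theta> A\<close>
  converges (a); evaluating \<open>V\<close> at the initial point bounds the quadratic forms of the two inverses
  applied to \<open>N\<close> and \<open>\<Upsilon>\<close> at the block vectors \<open>(m, m)\<close> and \<open>(\<beta> m, \<alpha> m)\<close> by
  \<open>2/3 (\<gamma> |m|\<^sup>2 + (\<alpha>/\<beta>) m\<^sup>T H\<^sup>-\<^sup>1 m)\<close>, where \<open>\<gamma> = \<beta> + \<alpha>/2\<close>.

  As \<open>J - A\<close> is the block pattern of \<open>-(a a\<^sup>T - H)\<close>, applying \<open>M\<close> (or \<open>M\<^sup>T\<close>) to these inverses
  means taking the expectation of this bound at \<open>m = (a a\<^sup>T - H) w\<close>; the two fourth-moment conditions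
  bound it by \<open>2/3 (\<gamma> R\<^sup>2 + \<alpha> \<kappa> / \<beta>) w\<^sup>T H w \<le> 2/3 w\<^sup>T H w\<close>, which gives (b) and (c). Finally
  \<open>E J = A\<close> gives \<open>T = T\<^sub>A + M\<close>, so \<open>W = 3 (I - T\<^sub>A)\<^sup>-\<^sup>1 N\<close> satisfies \<open>T W + N \<le> W\<close> in the Loewner
  order, which bounds the partial sums of \<open>\<Sum>\<^sub>t T\<^sup>t N\<close>.\<close>

section \<open>Block vectors and matrices\<close>

definition blockv :: "real^'d \<Rightarrow> real^'d \<Rightarrow> real^('d+'d)" where
  "blockv x y = (\<chi> i. case i of Inl j \<Rightarrow> x$j | Inr j \<Rightarrow> y$j)"

definition upper_block :: "real^('d+'d) \<Rightarrow> real^'d" where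
  "upper_block v = (\<chi> j. v $ Inl j)"

definition lower_block :: "real^('d+'d) \<Rightarrow> real^'d" where
  "lower_block v = (\<chi> j. v $ Inr j)"

lemma blockv_upper_lower [simp]: "blockv (upper_block v) (lower_block v) = v"
  by (simp add: blockv_def upper_block_def lower_block_def vec_eq_iff split: sum.split)

lemma upper_block_blockv [simp]: "upper_block (blockv x y) = x"
  and lower_block_blockv [simp]: "lower_block (blockv x y) = y"
  by (simp_all add: blockv_def upper_block_def lower_block_def)

lemma sum_UNIV_Plus:
  "(\<Sum>i\<in>(UNIV::('a::finite + 'b::finite) set). f i) = (\<Sum>j\<in>UNIV. f (Inl j)) + (\<Sum>j\<in>UNIV. f (Inr j))"
  by (simp add: UNIV_Plus_UNIV[symmetric] sum.Plus comp_def del: UNIV_Plus_UNIV)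

lemma inner_blockv: "blockv x y \<bullet> blockv x' y' = x \<bullet> x' + y \<bullet> y'"
  by (simp add: inner_vec_def sum_UNIV_Plus blockv_def)

lemma norm_sq_blockv: "(norm v)^2 = (norm (upper_block v))^2 + (norm (lower_block v))^2"
  by (metis blockv_upper_lower inner_blockv power2_norm_eq_inner)

lemma blockm_mult_blockv:
  "blockm P Q R S *v blockv x y = blockv (P *v x + Q *v y) (R *v x + S *v y)"
  by (simp add: vec_eq_iff matrix_vector_mult_def blockm_def blockv_def sum_UNIV_Plus sum.distrib
      split: sum.split)

lemma transpose_blockm:
  "transpose (blockm P Q R S) = blockm (transpose P) (transpose R) (transpose Q) (transpose S)"
  by (simp add: vec_eq_iff transpose_def blockm_def split: sum.split)

lemma blockm_diff:
  "blockm P Q R S - blockm P' Q' R' S' = blockm (P - P') (Q - Q') (R - R') (S - S')"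
  by (simp add: vec_eq_iff blockm_def split: sum.split)

section \<open>Matrices, quadratic forms and Neumann series\<close>

lemma transpose_diff: "transpose (A - B) = transpose A - transpose (B::real^'n^'m)"
  by (simp add: vec_eq_iff transpose_def)

lemma transpose_uminus: "transpose (- A) = - transpose (A::real^'n^'m)"
  by (simp add: vec_eq_iff transpose_def)

lemma transpose_add: "transpose (A + B) = transpose A + transpose (B::real^'n^'m)"
  by (simp add: vec_eq_iff transpose_def)

lemma matrix_add_rdistrib: "(A + B) ** C = A ** C + B ** (C::real^'p^'n)"
  by (simp add: vec_eq_iff matrix_matrix_mult_def sum.distrib distrib_right)

lemma matrix_vector_mult_uminus: "(- A) *v x = - (A *v (x::real^'n))"
  by (simp add: vec_eq_iff matrix_vector_mult_def sum_negf)

lemma inner_matrix_vector_transpose: "(A *v x) \<bullet> y = x \<bullet> (transpose A *v (y::real^'n))"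
  by (metis dot_lmul_matrix inner_commute transpose_matrix_vector)

lemma inner_axis_matrix_axis: "axis i 1 \<bullet> ((M::real^'n^'m) *v axis j 1) = M $ i $ j"
proof -
  have "(M *v axis j 1) $ i = M $ i $ j"
    by (simp add: matrix_vector_mult_def axis_def if_distrib cong: if_cong)
  then show ?thesis by (simp add: inner_axis')
qed

lemma bounded_linear_quadform: "bounded_linear (\<lambda>M::real^'n^'m. x \<bullet> (M *v y))"
proof -
  have "linear (\<lambda>M::real^'n^'m. x \<bullet> (M *v y))"
    by (rule linearI) (simp_all add: matrix_vector_mult_add_rdistrib inner_add_right
        matrix_vector_mult_def inner_vec_def sum_distrib_left sum.distrib algebra_simps)
  then show ?thesis using linear_conv_bounded_linear by blast
qed

lemma psd_cauchy_schwarz: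
  fixes P :: "real^'n^'n"
  assumes sym: "transpose P = P" and psd: "\<And>x. 0 \<le> x \<bullet> (P *v x)"
  shows "(x \<bullet> (P *v y))^2 \<le> (x \<bullet> (P *v x)) * (y \<bullet> (P *v y))"
proof -
  define X Y Z where "X = x \<bullet> (P *v x)" and "Y = y \<bullet> (P *v y)" and "Z = x \<bullet> (P *v y)"
  have "y \<bullet> (P *v x) = Z"
    unfolding Z_def using inner_matrix_vector_transpose[of P y x] sym by (simp add: inner_commute)
  then have quadratic: "0 \<le> X + 2*t*Z + t*t*Y" for t
    using psd[of "x + t *\<^sub>R y"] unfolding X_def Y_def Z_def
    by (simp add: matrix_vector_right_distrib matrix_vector_mult_scaleR algebra_simps)
  have "0 \<le> X" "0 \<le> Y" using psd unfolding X_def Y_def by auto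
  show ?thesis
  proof (cases "Y > 0")
    case True
    have "0 \<le> X + 2*(-Z/Y)*Z + (-Z/Y)*(-Z/Y)*Y" by (rule quadratic)
    also have "\<dots> = X - Z^2/Y" using True by (simp add: field_simps power2_eq_square)
    finally show ?thesis using True unfolding X_def Y_def Z_def by (simp add: field_simps)
  next
    case False
    with \<open>0 \<le> Y\<close> have "Y = 0" by simp
    have "Z = 0"
    proof (rule ccontr)
      assume "Z \<noteq> 0"
      have "0 \<le> X + 2*(-(X+1)/(2*Z))*Z" using quadratic[of "-(X+1)/(2*Z)"] \<open>Y = 0\<close> by simp
      also have "\<dots> = -1" using \<open>Z \<noteq> 0\<close> by (simp add: field_simps)
      finally show False by simp
    qed
    then show ?thesis using \<open>0 \<le> X\<close> \<open>Y = 0\<close> unfolding X_def Y_def Z_def by simp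
  qed
qed

definition sandwich :: "real^'n^'m \<Rightarrow> real^'n^'n \<Rightarrow> real^'m^'m" where
  "sandwich M \<Theta> = M ** \<Theta> ** transpose M"

lemma inner_sandwich:
  "y \<bullet> (sandwich M \<Theta> *v z) = (transpose M *v y) \<bullet> (\<Theta> *v (transpose M *v z))"
  by (simp add: sandwich_def matrix_vector_mul_assoc[symmetric] inner_matrix_vector_transpose
      del: transpose_matrix_vector)

lemma transpose_sandwich: "transpose \<Theta> = \<Theta> \<Longrightarrow> transpose (sandwich M \<Theta>) = sandwich M \<Theta>"
  by (simp add: sandwich_def matrix_transpose_mul matrix_mul_assoc)

lemma linear_sandwich: "linear (sandwich M)"
  by (rule linearI)
     (simp_all add: sandwich_def vec_eq_iff matrix_matrix_mult_def sum.distrib sum_distrib_left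
       sum_distrib_right algebra_simps)

definition orbit :: "real^'n^'n \<Rightarrow> real^'n \<Rightarrow> nat \<Rightarrow> real^'n" where
  "orbit M y t = ((*v) M ^^ t) y"

lemma orbit_0 [simp]: "orbit M y 0 = y"
  and orbit_Suc: "orbit M y (Suc t) = M *v orbit M y t"
  and orbit_Suc_shift: "orbit M y (Suc t) = orbit M (M *v y) t"
  by (simp_all add: orbit_def funpow_swap1)

lemma inner_sandwich_iter:
  "y \<bullet> ((sandwich M ^^ t) \<Theta> *v z) = orbit (transpose M) y t \<bullet> (\<Theta> *v orbit (transpose M) z t)"
proof (induction t arbitrary: y z)
  case (Suc t)
  then show ?case by (simp add: inner_sandwich orbit_Suc_shift del: transpose_matrix_vector)
qed simp

lemma summable_vec_nthI:
  fixes f :: "nat \<Rightarrow> 'a::real_normed_vector^'n"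
  assumes "\<And>i. summable (\<lambda>t. f t $ i)"
  shows "summable f"
proof -
  have "(\<lambda>n. \<Sum>t<n. f t) \<longlonglongrightarrow> (\<chi> i. \<Sum>t. f t $ i)"
    by (intro vec_tendstoI) (simp add: summable_LIMSEQ assms)
  then show ?thesis unfolding summable_def sums_def by blast
qed

lemma summable_matrixI:
  fixes P :: "nat \<Rightarrow> real^'n^'m"
  assumes "\<And>i j. summable (\<lambda>t. P t $ i $ j)"
  shows "summable P"
  by (intro summable_vec_nthI assms)

lemma summable_psd_matrix:
  fixes P :: "nat \<Rightarrow> real^'n^'n"
  assumes sym: "\<And>t. transpose (P t) = P t"
    and psd: "\<And>t x. 0 \<le> x \<bullet> (P t *v x)"
    and bounded: "\<And>x. \<exists>B. \<forall>n. (\<Sum>t<n. x \<bullet> (P t *v x)) \<le> B"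
  shows "summable P"
proof (rule summable_matrixI)
  have diagonal: "summable (\<lambda>t. P t $ i $ i)" for i
  proof -
    obtain B where B: "\<And>n. (\<Sum>t<n. axis i 1 \<bullet> (P t *v axis i 1)) \<le> B" using bounded by blast
    show ?thesis
    proof (rule bounded_imp_summable)
      show "0 \<le> P n $ i $ i" for n using psd[where t=n and x="axis i 1"] by (simp add: inner_axis_matrix_axis)
      show "(\<Sum>k\<le>n. P k $ i $ i) \<le> B" for n
        using B[of "Suc n"] by (simp add: inner_axis_matrix_axis lessThan_Suc_atMost)
    qed
  qed
  fix i j
  have "\<bar>P t $ i $ j\<bar> \<le> (P t $ i $ i + P t $ j $ j) / 2" for t
  proof -
    have expand: "(axis i 1 + s *\<^sub>R axis j 1) \<bullet> (P t *v (axis i 1 + s *\<^sub>R axis j 1))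
        = P t $ i $ i + s * P t $ i $ j + s * P t $ j $ i + s * s * P t $ j $ j" for s :: real
      by (simp add: matrix_vector_right_distrib matrix_vector_mult_scaleR inner_add_left inner_add_right
          inner_axis_matrix_axis algebra_simps)
    have "P t $ j $ i = P t $ i $ j" using sym[of t] by (metis transpose_def vec_lambda_beta)
    then show ?thesis
      using psd[where t=t and x="axis i 1 + 1 *\<^sub>R axis j 1"] psd[where t=t and x="axis i 1 + (-1) *\<^sub>R axis j 1"]
      unfolding expand by (simp add: abs_le_iff)
  qed
  then show "summable (\<lambda>t. P t $ i $ j)"
    by (intro summable_comparison_test[OF _ summable_divide[OF summable_add[OF diagonal[of i] diagonal[of j]],
          where c=2]]) auto
qed

lemma summable_sandwich_iter:
  assumes "\<And>y. summable (\<lambda>t. (norm (orbit (transpose M) y t))^2)"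
  shows "summable (\<lambda>t. (sandwich M ^^ t) \<Theta>)"
proof (rule summable_matrixI)
  obtain C where C: "C > 0" "\<And>x. norm (\<Theta> *v x) \<le> norm x * C"
    using bounded_linear.pos_bounded[OF matrix_vector_mul_bounded_linear] by blast
  fix i j
  let ?u = "orbit (transpose M) (axis i 1)" and ?w = "orbit (transpose M) (axis j 1)"
  have "norm ((sandwich M ^^ t) \<Theta> $ i $ j) \<le> C * ((norm (?u t))^2 + (norm (?w t))^2)" for t
  proof -
    have "norm ((sandwich M ^^ t) \<Theta> $ i $ j) = \<bar>?u t \<bullet> (\<Theta> *v ?w t)\<bar>"
      by (simp only: inner_axis_matrix_axis[symmetric] inner_sandwich_iter real_norm_def)
    also have "\<dots> \<le> norm (?u t) * (norm (?w t) * C)"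
      using Cauchy_Schwarz_ineq2[of "?u t" "\<Theta> *v ?w t"] C(2)[of "?w t"]
      by (meson mult_left_mono norm_ge_zero order_trans)
    also have "\<dots> \<le> C * ((norm (?u t))^2 + (norm (?w t))^2)"
    proof -
      have "norm (?u t) * norm (?w t) \<le> (norm (?u t))^2 + (norm (?w t))^2"
        using sum_squares_bound[of "norm (?u t)" "norm (?w t)"]
          mult_nonneg_nonneg[OF norm_ge_zero norm_ge_zero, of "?u t" "?w t"] by linarith
      then show ?thesis using C(1) by (simp add: mult_left_mono mult.left_commute mult.commute)
    qed
    finally show ?thesis .
  qed
  then show "summable (\<lambda>t. (sandwich M ^^ t) \<Theta> $ i $ j)"
    by (intro summable_comparison_test[OF _ summable_mult[OF summable_add[OF assms assms]]]) auto
qed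

lemma quadform_sum:
  fixes Q :: "'a \<Rightarrow> real^'n^'m"
  shows "x \<bullet> (sum Q S *v y) = (\<Sum>t\<in>S. x \<bullet> (Q t *v y))"
  using linear_sum[OF bounded_linear.linear[OF bounded_linear_quadform]] by (simp add: comp_def)

lemma quadform_suminf:
  fixes P :: "nat \<Rightarrow> real^'n^'m"
  assumes "summable P"
  shows "x \<bullet> (suminf P *v y) = (\<Sum>t. x \<bullet> (P t *v y))"
  using bounded_linear.suminf[OF bounded_linear_quadform assms] by simp

lemma quadform_suminf_le:
  fixes P :: "nat \<Rightarrow> real^'n^'n"
  assumes "summable P" and "\<And>n. (\<Sum>t<n. x \<bullet> (P t *v x)) \<le> B"
  shows "x \<bullet> (suminf P *v x) \<le> B"
  unfolding quadform_suminf[OF assms(1)]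
  by (rule suminf_le_const[OF bounded_linear.summable[OF bounded_linear_quadform assms(1)] assms(2)])

lemma inv_apply_unfold:
  assumes "bounded_linear S" and "inv_on_exists S \<Theta>"
  shows "inv_apply S \<Theta> = \<Theta> + S (inv_apply S \<Theta>)"
proof -
  have summable: "summable (\<lambda>t. (S ^^ t) \<Theta>)" using assms(2) unfolding inv_on_exists_def .
  have "S (inv_apply S \<Theta>) = (\<Sum>t. S ((S ^^ t) \<Theta>))"
    unfolding inv_apply_def by (rule bounded_linear.suminf[OF assms(1) summable])
  also have "\<dots> = inv_apply S \<Theta> - \<Theta>"
    unfolding inv_apply_def using suminf_split_head[OF summable] by simp
  finally show ?thesis by simp
qed

lemma psd_inv_apply:
  fixes S :: "real^'n^'n \<Rightarrow> real^'n^'n"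
  assumes "inv_on_exists S \<Theta>" and "\<And>t. loewner_le 0 ((S ^^ t) \<Theta>)"
  shows "loewner_le 0 (inv_apply S \<Theta>)"
  using assms unfolding inv_on_exists_def inv_apply_def loewner_le_def
  by (simp add: quadform_suminf suminf_nonneg bounded_linear.summable[OF bounded_linear_quadform])

lemma psd_funpow:
  fixes T :: "real^'n^'n \<Rightarrow> real^'n^'n"
  assumes "\<And>X. loewner_le 0 X \<Longrightarrow> loewner_le 0 (T X)" and "loewner_le 0 X"
  shows "loewner_le 0 ((T ^^ n) X)"
  by (induction n) (simp_all add: assms)

lemma neumann_partial_sum_le:
  fixes T :: "real^'n^'n \<Rightarrow> real^'n^'n"
  assumes lin: "linear T"
    and T_psd: "\<And>X. loewner_le 0 X \<Longrightarrow> loewner_le 0 (T X)"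
    and W: "loewner_le 0 W" "loewner_le (T W + N) W"
  shows "(\<Sum>t<n. x \<bullet> ((T ^^ t) N *v x)) \<le> x \<bullet> (W *v x)"
proof -
  define D where "D = W - T W - N"
  have Tn_add: "(T ^^ k) (X + Z) = (T ^^ k) X + (T ^^ k) Z" for k X Z
    by (induction k) (simp_all add: linear_add[OF lin])
  have D_psd: "loewner_le 0 D"
    using W(2) unfolding D_def loewner_le_def
    by (simp add: matrix_vector_mult_diff_rdistrib matrix_vector_mult_add_rdistrib algebra_simps)
  have W_split: "(\<Sum>t<k. (T ^^ t) N) + (T ^^ k) W + (\<Sum>t<k. (T ^^ t) D) = W" for k
  proof (induction k)
    case (Suc k)
    have "(\<Sum>t<Suc k. (T ^^ t) N) + (T ^^ Suc k) W + (\<Sum>t<Suc k. (T ^^ t) D)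
        = (\<Sum>t<k. (T ^^ t) N) + (T ^^ k) (N + T W + D) + (\<Sum>t<k. (T ^^ t) D)"
      by (simp add: Tn_add funpow_swap1 algebra_simps)
    also have "N + T W + D = W" unfolding D_def by simp
    finally show ?case using Suc.IH by simp
  qed simp
  have "x \<bullet> (W *v x) = (\<Sum>t<n. x \<bullet> ((T ^^ t) N *v x)) + x \<bullet> ((T ^^ n) W *v x)
      + (\<Sum>t<n. x \<bullet> ((T ^^ t) D *v x))"
    by (subst W_split[of n, symmetric]) (simp add: matrix_vector_mult_add_rdistrib inner_add_right quadform_sum)
  moreover have "0 \<le> x \<bullet> ((T ^^ n) W *v x)"
    using psd_funpow[OF T_psd W(1)] unfolding loewner_le_def by simp
  moreover have "0 \<le> (\<Sum>t<n. x \<bullet> ((T ^^ t) D *v x))"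
    using psd_funpow[OF T_psd D_psd] unfolding loewner_le_def by (simp add: sum_nonneg)
  ultimately show ?thesis by linarith
qed

lemma summable_neumann_supersolution:
  fixes T :: "real^'n^'n \<Rightarrow> real^'n^'n"
  assumes lin: "linear T"
    and T_psd: "\<And>X. loewner_le 0 X \<Longrightarrow> loewner_le 0 (T X)"
    and T_sym: "\<And>X. transpose X = X \<Longrightarrow> transpose (T X) = T X"
    and N: "transpose N = N" "loewner_le 0 N"
    and W: "loewner_le 0 W" "loewner_le (T W + N) W"
  shows "summable (\<lambda>t. (T ^^ t) N)"
proof (rule summable_psd_matrix)
  show "transpose ((T ^^ t) N) = (T ^^ t) N" for t
    by (induction t) (simp_all add: N T_sym)
  show "0 \<le> x \<bullet> ((T ^^ t) N *v x)" for t x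
    using psd_funpow[OF T_psd N(2)] unfolding loewner_le_def by simp
  show "\<exists>B. \<forall>n. (\<Sum>t<n. x \<bullet> ((T ^^ t) N *v x)) \<le> B" for x
    using neumann_partial_sum_le[OF lin T_psd W] by blast
qed

section \<open>A two-step recursion and its Lyapunov function\<close>

locale two_step_recursion =
  fixes H :: "real^'d^'d" and \<alpha> \<beta> R2 :: real
  assumes H_symmetric: "transpose H = H"
    and H_psd: "\<And>x. 0 \<le> x \<bullet> (H *v x)"
    and H_invertible: "invertible H"
    and H_sq_le: "\<And>x. (H *v x) \<bullet> (H *v x) \<le> R2 * (x \<bullet> (H *v x))"
    and \<alpha>_pos: "\<alpha> > 0" and \<beta>_pos: "\<beta> > 0"
    and step_size: "(\<alpha> + 2*\<beta>) * R2 \<le> 1"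
begin

abbreviation K :: "real^'d^'d" where "K \<equiv> matrix_inv H"

definition \<gamma> :: real where "\<gamma> = \<beta> + \<alpha>/2"

definition A :: "real^('d+'d)^('d+'d)" where
  "A = blockm (mat 1 - \<beta> *\<^sub>R H) (mat 1 - \<beta> *\<^sub>R H) (- (\<alpha> *\<^sub>R H)) (mat 1 - \<alpha> *\<^sub>R H)"

definition N :: "real^('d+'d)^('d+'d)" where
  "N = blockm ((\<beta>^2) *\<^sub>R H) ((\<alpha>*\<beta>) *\<^sub>R H) ((\<alpha>*\<beta>) *\<^sub>R H) ((\<alpha>^2) *\<^sub>R H)"

definition \<Upsilon> :: "real^('d+'d)^('d+'d)" where
  "\<Upsilon> = blockm H H H H"

text \<open>Trace and determinant of \<open>A\<close>, viewed as a \<open>2 \<times> 2\<close> matrix over the commutative algebra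
  generated by \<open>H\<close>.\<close>

definition trA :: "real^'d \<Rightarrow> real^'d" where
  "trA q = 2 *\<^sub>R q - (\<alpha> + \<beta>) *\<^sub>R (H *v q)"

definition detA :: "real^'d \<Rightarrow> real^'d" where
  "detA p = p - \<beta> *\<^sub>R (H *v p)"

definition satisfies_recursion :: "(nat \<Rightarrow> real^'d) \<Rightarrow> bool" where
  "satisfies_recursion r \<longleftrightarrow> (\<forall>t. r (Suc (Suc t)) = trA (r (Suc t)) - detA (r t))"

definition energy :: "real^'d \<Rightarrow> real" where
  "energy m = \<gamma> * (m \<bullet> m) + (\<alpha>/\<beta>) * (m \<bullet> (K *v m))"

definition lyap :: "real^'d \<Rightarrow> real^'d \<Rightarrow> real" where
  "lyap p q = p \<bullet> (H *v p) + (1 / (3*\<alpha>*\<beta>)) *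
     (2 * ((detA p - q) \<bullet> (K *v (detA p - q))) - \<gamma> * ((detA p - q) \<bullet> (detA p - q))
      + (\<alpha>/2) * ((detA p + q) \<bullet> (detA p + q)))"

lemma H_selfadjoint: "(H *v x) \<bullet> y = x \<bullet> (H *v y)"
  using inner_matrix_vector_transpose[of H x y] H_symmetric by simp

lemma H_mult_K: "H ** K = mat 1" and K_mult_H: "K ** H = mat 1"
proof -
  have "\<exists>H'. H ** H' = mat 1 \<and> H' ** H = mat 1" using H_invertible unfolding invertible_def .
  then have "H ** K = mat 1 \<and> K ** H = mat 1" unfolding matrix_inv_def by (rule someI_ex)
  then show "H ** K = mat 1" "K ** H = mat 1" by auto
qed

lemma K_H [simp]: "K *v (H *v x) = x" and H_K [simp]: "H *v (K *v x) = x"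
  by (simp_all add: matrix_vector_mul_assoc H_mult_K K_mult_H)

lemma K_selfadjoint: "(K *v x) \<bullet> y = x \<bullet> (K *v y)"
proof -
  have "(K *v x) \<bullet> y = (K *v x) \<bullet> (H *v (K *v y))" by simp
  also have "\<dots> = (H *v (K *v x)) \<bullet> (K *v y)" by (rule H_selfadjoint[symmetric])
  also have "\<dots> = x \<bullet> (K *v y)" by simp
  finally show ?thesis .
qed

lemma inner_H_swap: "x \<bullet> (H *v y) = y \<bullet> (H *v x)"
  and inner_K_swap: "x \<bullet> (K *v y) = y \<bullet> (K *v x)"
  and inner_H2_swap: "x \<bullet> (H *v (H *v y)) = y \<bullet> (H *v (H *v x))"
  and inner_H3_swap: "x \<bullet> (H *v (H *v (H *v y))) = y \<bullet> (H *v (H *v (H *v x)))"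
  by (metis H_selfadjoint K_selfadjoint inner_commute)+

lemmas quadform_simps = H_selfadjoint K_selfadjoint K_H H_K inner_H_swap inner_K_swap inner_H2_swap inner_H3_swap
  inner_add_left inner_add_right inner_diff_left inner_diff_right inner_scaleR_left inner_scaleR_right
  matrix_vector_right_distrib matrix_vector_mult_diff_distrib matrix_vector_mult_scaleR

lemma lyap_step:
  "lyap p q - lyap q (trA q - detA p)
     = p \<bullet> (H *v p) + (1/3) * (q \<bullet> (H *v q) - 2*\<gamma>*((H *v q) \<bullet> (H *v q)))"
  using \<alpha>_pos \<beta>_pos unfolding lyap_def detA_def trA_def \<gamma>_def
  by (simp add: quadform_simps) (simp add: field_simps inner_commute)

lemma lyap_initial:
  "(2/3) * energy m
     - lyap ((\<alpha>+\<beta>) *\<^sub>R m) ((2*\<alpha>+\<beta>) *\<^sub>R m - (\<alpha>+\<beta>)^2 *\<^sub>R (H *v m))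
   = ((\<alpha>+\<beta>)^2/3) * (m \<bullet> (H *v m) - 2*\<gamma>*((H *v m) \<bullet> (H *v m)))"
  using \<alpha>_pos \<beta>_pos unfolding lyap_def detA_def energy_def \<gamma>_def
  by (simp add: quadform_simps power2_eq_square) (simp add: field_simps)

lemma \<gamma>_pos: "\<gamma> > 0"
  using \<alpha>_pos \<beta>_pos unfolding \<gamma>_def by simp

lemma \<gamma>_R2: "2 * \<gamma> * R2 \<le> 1"
  using step_size unfolding \<gamma>_def by (simp add: algebra_simps)

lemma H_sq_remainder_nonneg: "0 \<le> q \<bullet> (H *v q) - 2*\<gamma>*((H *v q) \<bullet> (H *v q))"
proof -
  have "2*\<gamma>*((H *v q) \<bullet> (H *v q)) \<le> 2*\<gamma>*R2 * (q \<bullet> (H *v q))"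
    using H_sq_le[of q] \<gamma>_pos by (simp add: mult.assoc)
  also have "\<dots> \<le> q \<bullet> (H *v q)"
    using mult_right_mono[OF \<gamma>_R2 H_psd[of q]] by simp
  finally show ?thesis by simp
qed

lemma K_psd: "0 \<le> w \<bullet> (K *v w)"
  using H_psd[of "K *v w"] by (simp add: inner_commute)

lemma inner_le_K_quadform: "w \<bullet> w \<le> R2 * (w \<bullet> (K *v w))"
  using H_sq_le[of "K *v w"] by (simp add: inner_commute)

lemma lyap_nonneg: "0 \<le> lyap p q"
proof -
  have "\<gamma> * (w \<bullet> w) \<le> 2 * (w \<bullet> (K *v w))" for w
  proof -
    have "\<gamma> * (w \<bullet> w) \<le> (\<gamma> * R2) * (w \<bullet> (K *v w))"
      using mult_left_mono[OF inner_le_K_quadform \<gamma>_pos[THEN less_imp_le]] by (simp add: mult.assoc)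
    also have "\<dots> \<le> 2 * (w \<bullet> (K *v w))"
      using mult_right_mono[of "\<gamma> * R2" 2, OF _ K_psd] \<gamma>_R2 by simp
    finally show ?thesis .
  qed
  then show ?thesis
    unfolding lyap_def using H_psd[of p] \<alpha>_pos \<beta>_pos
    by (intro add_nonneg_nonneg mult_nonneg_nonneg) (auto intro: add_nonneg_nonneg)
qed

lemma sum_quadform_le_lyap:
  assumes "satisfies_recursion r"
  shows "(\<Sum>t<n. r t \<bullet> (H *v r t)) \<le> lyap (r 0) (r 1)"
proof -
  have "(\<Sum>t<n. r t \<bullet> (H *v r t)) \<le> lyap (r 0) (r 1) - lyap (r n) (r (Suc n))"
  proof (induction n)
    case (Suc n)
    have "r n \<bullet> (H *v r n) \<le> lyap (r n) (r (Suc n)) - lyap (r (Suc n)) (r (Suc (Suc n)))"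
      using lyap_step[of "r n" "r (Suc n)"] H_sq_remainder_nonneg[of "r (Suc n)"] assms
      unfolding satisfies_recursion_def by simp
    with Suc.IH show ?case by simp
  qed simp
  then show ?thesis using lyap_nonneg[of "r n" "r (Suc n)"] by simp
qed

lemma sum_quadform_le_initial:
  assumes "satisfies_recursion r"
    and "r 0 = (\<alpha>+\<beta>) *\<^sub>R m" and "r 1 = (2*\<alpha>+\<beta>) *\<^sub>R m - (\<alpha>+\<beta>)^2 *\<^sub>R (H *v m)"
  shows "(\<Sum>t<n. r t \<bullet> (H *v r t)) \<le> (2/3) * energy m"
proof -
  have "0 \<le> ((\<alpha>+\<beta>)^2/3) * (m \<bullet> (H *v m) - 2*\<gamma>*((H *v m) \<bullet> (H *v m)))"
    using H_sq_remainder_nonneg[of m] by simp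
  then have "lyap (r 0) (r 1) \<le> (2/3) * energy m"
    using lyap_initial[of m] unfolding assms(2,3) by linarith
  with sum_quadform_le_lyap[OF assms(1)] show ?thesis by (rule order_trans)
qed

lemma A_mult_blockv: "A *v blockv f g = blockv (detA (f + g)) (g - \<alpha> *\<^sub>R (H *v (f + g)))"
  by (simp add: A_def detA_def blockm_mult_blockv matrix_vector_mult_diff_rdistrib matrix_vector_mult_uminus
      scaleR_matrix_vector_assoc[symmetric] algebra_simps)

lemma transpose_A_mult_blockv:
  "transpose A *v blockv f g = blockv (detA f - \<alpha> *\<^sub>R (H *v g)) (detA f + g - \<alpha> *\<^sub>R (H *v g))"
  by (simp add: A_def detA_def transpose_blockm blockm_mult_blockv transpose_scalar transpose_diff
      transpose_uminus H_symmetric matrix_vector_mult_diff_rdistrib matrix_vector_mult_uminus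
      scaleR_matrix_vector_assoc[symmetric]
      algebra_simps del: transpose_matrix_vector)

lemma A_cayley_hamilton:
  "upper_block (A *v (A *v y)) = trA (upper_block (A *v y)) - detA (upper_block y)"
  "lower_block (A *v (A *v y)) = trA (lower_block (A *v y)) - detA (lower_block y)"
proof -
  obtain f g where y: "y = blockv f g" using blockv_upper_lower by metis
  show "upper_block (A *v (A *v y)) = trA (upper_block (A *v y)) - detA (upper_block y)"
    "lower_block (A *v (A *v y)) = trA (lower_block (A *v y)) - detA (lower_block y)"
    unfolding y A_mult_blockv upper_block_blockv lower_block_blockv trA_def detA_def
      matrix_vector_right_distrib matrix_vector_mult_diff_distrib matrix_vector_mult_scaleR
    by (simp_all add: algebra_simps vec_eq_iff)
qed

lemma transpose_A_cayley_hamilton: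
  "upper_block (transpose A *v (transpose A *v y))
     = trA (upper_block (transpose A *v y)) - detA (upper_block y)"
  "lower_block (transpose A *v (transpose A *v y))
     = trA (lower_block (transpose A *v y)) - detA (lower_block y)"
proof -
  obtain f g where y: "y = blockv f g" using blockv_upper_lower by metis
  show "upper_block (transpose A *v (transpose A *v y))
      = trA (upper_block (transpose A *v y)) - detA (upper_block y)"
    "lower_block (transpose A *v (transpose A *v y))
      = trA (lower_block (transpose A *v y)) - detA (lower_block y)"
    unfolding y transpose_A_mult_blockv upper_block_blockv lower_block_blockv trA_def detA_def
      matrix_vector_right_distrib matrix_vector_mult_diff_distrib matrix_vector_mult_scaleR
    by (simp_all add: algebra_simps vec_eq_iff)
qed

lemma satisfies_recursion_orbit:
  assumes "M = A \<or> M = transpose A"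
  shows "satisfies_recursion (\<lambda>t. c *\<^sub>R upper_block (orbit M y t) + e *\<^sub>R lower_block (orbit M y t))"
proof -
  have cayley_hamilton:
    "upper_block (M *v (M *v z)) = trA (upper_block (M *v z)) - detA (upper_block z)"
    "lower_block (M *v (M *v z)) = trA (lower_block (M *v z)) - detA (lower_block z)" for z
    using assms A_cayley_hamilton transpose_A_cayley_hamilton by blast+
  show ?thesis
    unfolding satisfies_recursion_def orbit_Suc cayley_hamilton by (simp add: trA_def detA_def algebra_simps)
qed

lemma H_coercive: "\<exists>B>0. \<forall>x. x \<bullet> x \<le> B * (x \<bullet> (H *v x))"
proof -
  obtain B where B: "B > 0" "\<And>x. norm (K *v x) \<le> norm x * B"
    using bounded_linear.pos_bounded[OF matrix_vector_mul_bounded_linear] by blast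
  have "x \<bullet> x \<le> B * (x \<bullet> (H *v x))" for x
  proof -
    have "(x \<bullet> x)^2 \<le> (x \<bullet> (H *v x)) * ((K *v x) \<bullet> x)"
      using psd_cauchy_schwarz[OF H_symmetric H_psd, of x "K *v x"] by simp
    also have "\<dots> \<le> (x \<bullet> (H *v x)) * (B * (x \<bullet> x))"
    proof (rule mult_left_mono[OF _ H_psd])
      have "(K *v x) \<bullet> x \<le> norm (K *v x) * norm x" by (rule norm_cauchy_schwarz)
      also have "\<dots> \<le> B * (x \<bullet> x)"
        using mult_right_mono[OF B(2)[of x] norm_ge_zero[of x]]
        by (simp add: power2_norm_eq_inner[symmetric] power2_eq_square algebra_simps)
      finally show "(K *v x) \<bullet> x \<le> B * (x \<bullet> x)" .
    qed
    finally have "(x \<bullet> x) * (x \<bullet> x) \<le> (B * (x \<bullet> (H *v x))) * (x \<bullet> x)"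
      by (simp add: power2_eq_square algebra_simps)
    then show ?thesis
      by (cases "x = 0") (simp_all add: H_psd)
  qed
  with B(1) show ?thesis by blast
qed

lemma summable_orbit_norm_sq:
  assumes "M = A \<or> M = transpose A"
  shows "summable (\<lambda>t. (norm (orbit M y t))^2)"
proof -
  obtain B where B: "B > 0" "\<And>x. x \<bullet> x \<le> B * (x \<bullet> (H *v x))" using H_coercive by blast
  define u where "u t = upper_block (orbit M y t)" for t
  define l where "l t = lower_block (orbit M y t)" for t
  have recursion: "satisfies_recursion u" "satisfies_recursion l"
    using satisfies_recursion_orbit[OF assms, of 1 y 0] satisfies_recursion_orbit[OF assms, of 0 y 1]
    unfolding u_def l_def by simp_all
  have pointwise: "(norm (orbit M y t))^2 \<le> B * (u t \<bullet> (H *v u t)) + B * (l t \<bullet> (H *v l t))" for t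
    using B(2)[of "u t"] B(2)[of "l t"] norm_sq_blockv[of "orbit M y t"]
    unfolding u_def l_def by (simp add: power2_norm_eq_inner)
  show ?thesis
  proof (rule bounded_imp_summable)
    fix n
    have "(\<Sum>t\<le>n. (norm (orbit M y t))^2) \<le> (\<Sum>t<Suc n. B * (u t \<bullet> (H *v u t)) + B * (l t \<bullet> (H *v l t)))"
      unfolding lessThan_Suc_atMost by (rule sum_mono[OF pointwise])
    also have "\<dots> = B * (\<Sum>t<Suc n. u t \<bullet> (H *v u t)) + B * (\<Sum>t<Suc n. l t \<bullet> (H *v l t))"
      by (simp only: sum.distrib sum_distrib_left)
    also have "\<dots> \<le> B * lyap (u 0) (u 1) + B * lyap (l 0) (l 1)"
      using B(1) by (intro add_mono mult_left_mono sum_quadform_le_lyap recursion) simp_all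
    finally show "(\<Sum>t\<le>n. (norm (orbit M y t))^2) \<le> B * lyap (u 0) (u 1) + B * lyap (l 0) (l 1)" .
  qed simp
qed

lemma inv_exists_sandwich_A: "inv_exists (sandwich A)" "inv_exists (sandwich (transpose A))"
  unfolding inv_exists_def
  using summable_sandwich_iter summable_orbit_norm_sq transpose_transpose by metis+

lemma N_quadform:
  "x \<bullet> (N *v x) = (\<beta> *\<^sub>R upper_block x + \<alpha> *\<^sub>R lower_block x) \<bullet> (H *v (\<beta> *\<^sub>R upper_block x + \<alpha> *\<^sub>R lower_block x))"
proof -
  obtain f g where x: "x = blockv f g" using blockv_upper_lower by metis
  show ?thesis
    unfolding x N_def blockm_mult_blockv inner_blockv
    by (simp add: scaleR_matrix_vector_assoc[symmetric] quadform_simps inner_H_swap[of g f] algebra_simps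
        power2_eq_square)
qed

lemma \<Upsilon>_quadform:
  "x \<bullet> (\<Upsilon> *v x) = (upper_block x + lower_block x) \<bullet> (H *v (upper_block x + lower_block x))"
proof -
  obtain f g where x: "x = blockv f g" using blockv_upper_lower by metis
  show ?thesis
    unfolding x \<Upsilon>_def blockm_mult_blockv inner_blockv by (simp add: quadform_simps)
qed

lemma N_symmetric: "transpose N = N" and \<Upsilon>_symmetric: "transpose \<Upsilon> = \<Upsilon>"
  by (simp_all add: N_def \<Upsilon>_def transpose_blockm transpose_scalar H_symmetric)

lemma N_psd: "loewner_le 0 N" and \<Upsilon>_psd: "loewner_le 0 \<Upsilon>"
  by (simp_all add: loewner_le_def N_quadform \<Upsilon>_quadform H_psd)

lemma quadform_neumann_N_le:
  "blockv m m \<bullet> (inv_apply (sandwich A) N *v blockv m m)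
     \<le> (2/3) * energy m"
  unfolding inv_apply_def
proof (rule quadform_suminf_le)
  show "summable (\<lambda>t. (sandwich A ^^ t) N)"
    using inv_exists_sandwich_A unfolding inv_exists_def by blast
  let ?o = "orbit (transpose A) (blockv m m)"
  define r where "r t = \<beta> *\<^sub>R upper_block (?o t) + \<alpha> *\<^sub>R lower_block (?o t)" for t
  have "satisfies_recursion r"
    unfolding r_def by (rule satisfies_recursion_orbit) simp
  moreover have "r 0 = (\<alpha>+\<beta>) *\<^sub>R m" by (simp add: r_def algebra_simps)
  moreover have "r 1 = (2*\<alpha>+\<beta>) *\<^sub>R m - (\<alpha>+\<beta>)^2 *\<^sub>R (H *v m)"
    by (simp add: r_def orbit_Suc transpose_A_mult_blockv detA_def vec_eq_iff algebra_simps power2_eq_square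
        del: transpose_matrix_vector)
  ultimately have "(\<Sum>t<n. r t \<bullet> (H *v r t)) \<le> (2/3) * energy m" for n
    by (rule sum_quadform_le_initial)
  then show "(\<Sum>t<n. blockv m m \<bullet> ((sandwich A ^^ t) N *v blockv m m))
      \<le> (2/3) * energy m" for n
    by (simp add: inner_sandwich_iter N_quadform r_def)
qed

lemma quadform_neumann_\<Upsilon>_le:
  "blockv (\<beta> *\<^sub>R m) (\<alpha> *\<^sub>R m) \<bullet> (inv_apply (sandwich (transpose A)) \<Upsilon> *v blockv (\<beta> *\<^sub>R m) (\<alpha> *\<^sub>R m))
     \<le> (2/3) * energy m"
  unfolding inv_apply_def
proof (rule quadform_suminf_le)
  show "summable (\<lambda>t. (sandwich (transpose A) ^^ t) \<Upsilon>)"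
    using inv_exists_sandwich_A unfolding inv_exists_def by blast
  let ?o = "orbit A (blockv (\<beta> *\<^sub>R m) (\<alpha> *\<^sub>R m))"
  define r where "r t = upper_block (?o t) + lower_block (?o t)" for t
  have "satisfies_recursion r"
    using satisfies_recursion_orbit[of A 1 _ 1] unfolding r_def by simp
  moreover have "r 0 = (\<alpha>+\<beta>) *\<^sub>R m" by (simp add: r_def algebra_simps)
  moreover have "r 1 = (2*\<alpha>+\<beta>) *\<^sub>R m - (\<alpha>+\<beta>)^2 *\<^sub>R (H *v m)"
    by (simp add: r_def orbit_Suc A_mult_blockv detA_def vec_eq_iff algebra_simps power2_eq_square)
  ultimately have "(\<Sum>t<n. r t \<bullet> (H *v r t)) \<le> (2/3) * energy m" for n
    by (rule sum_quadform_le_initial)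
  then show "(\<Sum>t<n. blockv (\<beta> *\<^sub>R m) (\<alpha> *\<^sub>R m) \<bullet> ((sandwich (transpose A) ^^ t) \<Upsilon> *v
        blockv (\<beta> *\<^sub>R m) (\<alpha> *\<^sub>R m))) \<le> (2/3) * energy m" for n
    by (simp add: inner_sandwich_iter \<Upsilon>_quadform r_def)
qed

end

section \<open>Expectations over the data distribution\<close>

lemma outer_mult_vec: "outer a *v y = (a \<bullet> y) *\<^sub>R a"
  by (simp add: vec_eq_iff outer_def matrix_vector_mult_def inner_vec_def sum_distrib_left algebra_simps)

lemma transpose_outer: "transpose (outer a) = outer a"
  by (simp add: vec_eq_iff outer_def transpose_def)

lemma norm_outer: "norm (outer a) = (norm a)^2"
proof -
  have row: "outer a $ i = a $ i *\<^sub>R a" for i by (simp add: vec_eq_iff outer_def)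
  have "outer a \<bullet> outer a = (\<Sum>i\<in>UNIV. (a $ i *\<^sub>R a) \<bullet> (a $ i *\<^sub>R a))"
    by (simp add: inner_vec_def row)
  also have "\<dots> = (\<Sum>i\<in>UNIV. a $ i * a $ i) * (a \<bullet> a)" by (simp add: sum_distrib_right mult.assoc)
  also have "(\<Sum>i\<in>UNIV. a $ i * a $ i) = a \<bullet> a" by (simp add: inner_vec_def)
  finally show ?thesis by (simp add: norm_eq_sqrt_inner power2_eq_square)
qed

lemma not_invertible_0: "\<not> invertible (0::real^'n^'n)"
proof
  assume "invertible (0::real^'n^'n)"
  then have "(mat 1 :: real^'n^'n) = 0" unfolding invertible_def by auto
  then have "(mat 1 :: real^'n^'n) $ i $ i = 0" for i by simp
  then show False by (simp add: mat_def)
qed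

lemma bilinear_sandwich: "bilinear (\<lambda>X Y. X ** \<Theta> ** transpose (Y::real^'n^'m))"
proof -
  have right: "linear (\<lambda>Y. X ** \<Theta> ** transpose (Y::real^'n^'m))" for X
    by (rule linearI) (simp add: transpose_add matrix_add_ldistrib,
        simp add: transpose_scalar matrix_scalar_ac scalar_matrix_assoc)
  have left: "linear (\<lambda>X. X ** \<Theta> ** transpose (Y::real^'n^'m))" for Y
    by (rule linearI) (simp add: matrix_add_rdistrib, simp add: scalar_matrix_assoc)
  show ?thesis unfolding bilinear_def by (intro conjI allI left right)
qed

lemma integrable_sandwich:
  fixes f :: "'a \<Rightarrow> real^'n^'m"
  assumes f: "f \<in> borel_measurable M" and norm_sq: "integrable M (\<lambda>z. (norm (f z))^2)"
  shows "integrable M (\<lambda>z. sandwich (f z) \<Theta>)"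
proof -
  have "bounded_bilinear (\<lambda>(X::real^'n^'m) (Y::real^'n^'m). X ** \<Theta> ** transpose Y)"
    using bilinear_sandwich bilinear_conv_bounded_bilinear by blast
  then obtain C where C: "\<And>X Y. norm ((X::real^'n^'m) ** \<Theta> ** transpose (Y::real^'n^'m)) \<le> norm X * norm Y * C"
    using bounded_bilinear.bounded by blast
  have "continuous_on UNIV (\<lambda>X. X ** \<Theta> ** transpose (X::real^'n^'m))"
    by (rule bilinear_continuous_on_compose[OF continuous_on_id continuous_on_id bilinear_sandwich])
  from borel_measurable_continuous_on[OF this f]
  have measurable: "(\<lambda>z. sandwich (f z) \<Theta>) \<in> borel_measurable M" unfolding sandwich_def .
  have "norm (sandwich (f z) \<Theta>) \<le> norm (\<bar>C\<bar> * (norm (f z))^2)" for z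
  proof -
    have "norm (sandwich (f z) \<Theta>) \<le> norm (f z) * norm (f z) * C" unfolding sandwich_def by (rule C)
    also have "\<dots> \<le> norm (f z) * norm (f z) * \<bar>C\<bar>" by (intro mult_left_mono) auto
    also have "\<dots> = norm (\<bar>C\<bar> * (norm (f z))^2)" by (simp add: power2_eq_square abs_mult)
    finally show ?thesis .
  qed
  then show ?thesis
    by (intro Bochner_Integration.integrable_bound[OF integrable_mult_right[OF norm_sq] measurable] AE_I2)
qed

lemma loewner_le_integralI:
  fixes F :: "'a \<Rightarrow> real^'n^'n"
  assumes B_psd: "loewner_le 0 B"
    and pointwise: "\<And>x z. x \<bullet> (F z *v x) \<le> g x z"
    and integrable_g: "\<And>x. integrable M (g x)"
    and integral_g: "\<And>x. integral\<^sup>L M (g x) \<le> x \<bullet> (B *v x)"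
  shows "loewner_le (integral\<^sup>L M F) B"
  unfolding loewner_le_def
proof
  fix x
  show "x \<bullet> (integral\<^sup>L M F *v x) \<le> x \<bullet> (B *v x)"
  proof (cases "integrable M F")
    case True
    have "x \<bullet> (integral\<^sup>L M F *v x) = (\<integral>z. x \<bullet> (F z *v x) \<partial>M)"
      by (rule integral_bounded_linear[OF bounded_linear_quadform True, symmetric])
    also have "\<dots> \<le> integral\<^sup>L M (g x)"
      by (rule integral_mono[OF integrable_bounded_linear[OF bounded_linear_quadform True] integrable_g pointwise])
    finally show ?thesis using integral_g by (rule order_trans)
  next
    case False
    then show ?thesis using B_psd by (simp add: not_integrable_integral_eq loewner_le_def)
  qed
qed

lemma psd_integral_sandwich:
  assumes "integrable M (\<lambda>z. sandwich (f z) \<Theta>)" and "loewner_le 0 \<Theta>"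
  shows "loewner_le 0 (\<integral>z. sandwich (f z) \<Theta> \<partial>M)"
  using assms unfolding loewner_le_def
  by (simp add: integral_bounded_linear[OF bounded_linear_quadform, symmetric] inner_sandwich
      integral_nonneg_AE)

lemma symmetric_integral_sandwich:
  assumes "integrable M (\<lambda>z. sandwich (f z) \<Theta>)" and "transpose \<Theta> = \<Theta>"
  shows "transpose (\<integral>z. sandwich (f z) \<Theta> \<partial>M) = (\<integral>z. sandwich (f z) \<Theta> \<partial>M)"
proof -
  have "bounded_linear (transpose :: real^'n^'n \<Rightarrow> real^'n^'n)"
    by (intro linear_conv_bounded_linear[THEN iffD1] linearI) (simp_all add: vec_eq_iff transpose_def)
  from integral_bounded_linear[OF this assms(1)] show ?thesis
    by (simp add: transpose_sandwich[OF assms(2)])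
qed

locale least_squares_setting = prob_space \<rho> for \<rho> :: "((real^'d) \<times> real) measure" +
  fixes R \<kappa> \<alpha> \<beta> :: real
  assumes Hmat_invertible: "invertible (Hmat \<rho>)"
    and integrable_norm_moment: "integrable \<rho> (\<lambda>z. (norm (fst z))^2 *\<^sub>R outer (fst z))"
    and norm_moment_le: "loewner_le (\<integral>z. (norm (fst z))^2 *\<^sub>R outer (fst z) \<partial>\<rho>) (R^2 *\<^sub>R Hmat \<rho>)"
    and integrable_K_moment:
      "integrable \<rho> (\<lambda>z. (fst z \<bullet> (matrix_inv (Hmat \<rho>) *v fst z)) *\<^sub>R outer (fst z))"
    and K_moment_le:
      "loewner_le (\<integral>z. (fst z \<bullet> (matrix_inv (Hmat \<rho>) *v fst z)) *\<^sub>R outer (fst z) \<partial>\<rho>) (\<kappa> *\<^sub>R Hmat \<rho>)"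
    and step_pos: "\<alpha> > 0" "\<beta> > 0"
    and step_le: "(\<alpha> + 2*\<beta>) * R^2 \<le> 1"
    and \<alpha>_le: "\<alpha> \<le> \<beta> / (2*\<kappa>)"
begin

abbreviation H :: "real^'d^'d" where "H \<equiv> Hmat \<rho>"

text \<open>A non-integrable function has Bochner integral \<open>0\<close>, which is not invertible, so the
  invertibility of \<open>H\<close> forces \<open>a a\<^sup>T\<close> to be integrable.\<close>

lemma integrable_outer: "integrable \<rho> (\<lambda>z. outer (fst z))"
  using Hmat_invertible not_invertible_0 not_integrable_integral_eq unfolding Hmat_def by metis

lemma H_quadform: "x \<bullet> (H *v y) = (\<integral>z. (fst z \<bullet> x) * (fst z \<bullet> y) \<partial>\<rho>)"
  using integral_bounded_linear[OF bounded_linear_quadform[of x y] integrable_outer]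
  unfolding Hmat_def by (simp add: outer_mult_vec inner_commute mult.commute)

lemma integrable_inner_mult: "integrable \<rho> (\<lambda>z. (fst z \<bullet> x) * (fst z \<bullet> y))"
  using integrable_bounded_linear[OF bounded_linear_quadform[of x y] integrable_outer]
  by (simp add: outer_mult_vec inner_commute mult.commute)

lemma H_psd: "0 \<le> x \<bullet> (H *v x)"
  by (simp add: H_quadform)

lemma H_symmetric: "transpose H = H"
proof -
  have "transpose H $ i $ j = H $ i $ j" for i j
    using H_quadform[of "axis i 1" "axis j 1"] H_quadform[of "axis j 1" "axis i 1"]
    by (simp add: inner_axis_matrix_axis[symmetric] transpose_def mult.commute)
  then show ?thesis by (simp add: vec_eq_iff)
qed

lemma weighted_moment_quadform:
  assumes "integrable \<rho> (\<lambda>z. c (fst z) *\<^sub>R outer (fst z))"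
  shows "integrable \<rho> (\<lambda>z. c (fst z) * (fst z \<bullet> x)^2)"
    and "x \<bullet> ((\<integral>z. c (fst z) *\<^sub>R outer (fst z) \<partial>\<rho>) *v x) = (\<integral>z. c (fst z) * (fst z \<bullet> x)^2 \<partial>\<rho>)"
proof -
  have eq: "x \<bullet> ((c (fst z) *\<^sub>R outer (fst z)) *v x) = c (fst z) * (fst z \<bullet> x)^2" for z
    by (simp add: outer_mult_vec scaleR_matrix_vector_assoc[symmetric] power2_eq_square inner_commute)
  show "integrable \<rho> (\<lambda>z. c (fst z) * (fst z \<bullet> x)^2)"
    using integrable_bounded_linear[OF bounded_linear_quadform[of x x] assms] unfolding eq .
  have "(\<integral>z. x \<bullet> ((c (fst z) *\<^sub>R outer (fst z)) *v x) \<partial>\<rho>)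
      = x \<bullet> ((\<integral>z. c (fst z) *\<^sub>R outer (fst z) \<partial>\<rho>) *v x)"
    by (rule integral_bounded_linear[OF bounded_linear_quadform assms])
  then show "x \<bullet> ((\<integral>z. c (fst z) *\<^sub>R outer (fst z) \<partial>\<rho>) *v x) = (\<integral>z. c (fst z) * (fst z \<bullet> x)^2 \<partial>\<rho>)"
    by (simp only: eq)
qed

lemma norm_moment_quadform_le: "(\<integral>z. (norm (fst z))^2 * (fst z \<bullet> x)^2 \<partial>\<rho>) \<le> R^2 * (x \<bullet> (H *v x))"
proof -
  have "x \<bullet> ((\<integral>z. (norm (fst z))^2 *\<^sub>R outer (fst z) \<partial>\<rho>) *v x) \<le> x \<bullet> ((R^2 *\<^sub>R H) *v x)"
    using norm_moment_le unfolding loewner_le_def by blast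
  then show ?thesis
    by (simp add: weighted_moment_quadform(2)[OF integrable_norm_moment] scaleR_matrix_vector_assoc[symmetric])
qed

lemma K_moment_quadform_le:
  "(\<integral>z. (fst z \<bullet> (matrix_inv H *v fst z)) * (fst z \<bullet> x)^2 \<partial>\<rho>) \<le> \<kappa> * (x \<bullet> (H *v x))"
proof -
  have "x \<bullet> ((\<integral>z. (fst z \<bullet> (matrix_inv H *v fst z)) *\<^sub>R outer (fst z) \<partial>\<rho>) *v x) \<le> x \<bullet> ((\<kappa> *\<^sub>R H) *v x)"
    using K_moment_le unfolding loewner_le_def by blast
  then show ?thesis
    by (simp add: weighted_moment_quadform(2)[OF integrable_K_moment] scaleR_matrix_vector_assoc[symmetric])
qed

text \<open>Jensen's inequality \<open>(E (a\<^sup>Tx)\<^sup>2)\<^sup>2 \<le> E (a\<^sup>Tx)\<^sup>4\<close> combined with \<open>(a\<^sup>Tx)\<^sup>2 \<le> |a|\<^sup>2 |x|\<^sup>2\<close>.\<close>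

lemma quadform_H_le: "x \<bullet> (H *v x) \<le> R^2 * (x \<bullet> x)"
proof -
  define X where "X z = (fst z \<bullet> x)^2" for z :: "(real^'d) \<times> real"
  have X: "integrable \<rho> X" unfolding X_def using integrable_inner_mult[of x x] by (simp add: power2_eq_square)
  have majorant: "integrable \<rho> (\<lambda>z. (x \<bullet> x) * ((norm (fst z))^2 * (fst z \<bullet> x)^2))"
    using weighted_moment_quadform(1)[OF integrable_norm_moment] by simp
  have bound: "(X z)^2 \<le> (x \<bullet> x) * ((norm (fst z))^2 * (fst z \<bullet> x)^2)" for z
  proof -
    have "(fst z \<bullet> x)^2 \<le> (norm (fst z))^2 * (x \<bullet> x)"
      using Cauchy_Schwarz_ineq[of "fst z" x] by (simp add: power2_norm_eq_inner)
    then have "(fst z \<bullet> x)^2 * (fst z \<bullet> x)^2 \<le> ((norm (fst z))^2 * (x \<bullet> x)) * (fst z \<bullet> x)^2"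
      by (rule mult_right_mono) simp
    then show ?thesis unfolding X_def by (simp add: power2_eq_square[of "(fst z \<bullet> x)^2"] algebra_simps)
  qed
  have X2: "integrable \<rho> (\<lambda>z. (X z)^2)"
  proof (rule Bochner_Integration.integrable_bound[OF majorant])
    show "(\<lambda>z. (X z)^2) \<in> borel_measurable \<rho>" using borel_measurable_integrable[OF X] by measurable
    show "AE z in \<rho>. norm ((X z)^2) \<le> norm ((x \<bullet> x) * ((norm (fst z))^2 * (fst z \<bullet> x)^2))"
      using bound by (intro AE_I2) (simp add: order_trans[OF _ abs_ge_self])
  qed
  have "(x \<bullet> (H *v x))^2 = (expectation X)^2"
    unfolding X_def H_quadform by (simp add: power2_eq_square)
  also have "\<dots> \<le> expectation (\<lambda>z. (X z)^2)"
    using variance_positive[of X] variance_eq[OF X X2] by simp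
  also have "\<dots> \<le> expectation (\<lambda>z. (x \<bullet> x) * ((norm (fst z))^2 * (fst z \<bullet> x)^2))"
    by (rule integral_mono[OF X2 majorant bound])
  also have "\<dots> \<le> (x \<bullet> x) * (R^2 * (x \<bullet> (H *v x)))"
    using mult_left_mono[OF norm_moment_quadform_le inner_ge_zero[of x]] by simp
  finally have "(x \<bullet> (H *v x)) * (x \<bullet> (H *v x)) \<le> (R^2 * (x \<bullet> x)) * (x \<bullet> (H *v x))"
    by (simp add: power2_eq_square algebra_simps)
  then show ?thesis
    using H_psd[of x] by (cases "x \<bullet> (H *v x) = 0") (auto simp: zero_le_mult_iff)
qed

lemma H_sq_le: "(H *v x) \<bullet> (H *v x) \<le> R^2 * (x \<bullet> (H *v x))"
proof -
  define n where "n = (H *v x) \<bullet> (H *v x)"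
  have "n^2 = (x \<bullet> (H *v (H *v x)))^2"
    unfolding n_def using inner_matrix_vector_transpose[of H x "H *v x"] H_symmetric by simp
  also have "\<dots> \<le> (x \<bullet> (H *v x)) * ((H *v x) \<bullet> (H *v (H *v x)))"
    by (rule psd_cauchy_schwarz[OF H_symmetric H_psd])
  also have "\<dots> \<le> (x \<bullet> (H *v x)) * (R^2 * n)"
    unfolding n_def by (rule mult_left_mono[OF quadform_H_le H_psd])
  finally have "n * n \<le> (R^2 * (x \<bullet> (H *v x))) * n" by (simp add: power2_eq_square algebra_simps)
  then show ?thesis
    unfolding n_def by (cases "H *v x = 0") (auto simp: zero_le_mult_iff)
qed

sublocale two_step_recursion H \<alpha> \<beta> "R^2"
  by unfold_locales (rule H_symmetric H_psd Hmat_invertible H_sq_le step_pos step_le)+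

lemma \<kappa>_pos: "\<kappa> > 0"
proof (rule ccontr)
  assume "\<not> \<kappa> > 0"
  then have "\<beta> / (2*\<kappa>) \<le> 0" using step_pos by (simp add: divide_nonneg_nonpos)
  then show False using \<alpha>_le step_pos by simp
qed

lemma Amat_eq: "Amat \<rho> \<alpha> \<beta> = A"
  by (simp add: Amat_def A_def)

lemma Nmat_eq: "Nmat \<rho> \<alpha> \<beta> = N" and Upsilon_eq: "Upsilon \<rho> = \<Upsilon>"
  by (simp_all add: Nmat_def N_def Upsilon_def \<Upsilon>_def)

lemma Ttil_eq: "Ttil \<rho> \<alpha> \<beta> = sandwich A" and TtilT_eq: "TtilT \<rho> \<alpha> \<beta> = sandwich (transpose A)"
  by (simp_all add: fun_eq_iff Ttil_def TtilT_def sandwich_def Amat_eq)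

definition centered_outer :: "real^'d \<Rightarrow> real^'d^'d" where
  "centered_outer a = outer a - H"

definition noise_blockm :: "real^'d^'d \<Rightarrow> real^('d+'d)^('d+'d)" where
  "noise_blockm C = blockm (\<beta> *\<^sub>R C) (\<beta> *\<^sub>R C) (\<alpha> *\<^sub>R C) (\<alpha> *\<^sub>R C)"

lemma Jmat_eq: "Jmat \<alpha> \<beta> a = A - noise_blockm (centered_outer a)"
  by (simp add: Jmat_def A_def noise_blockm_def centered_outer_def blockm_diff algebra_simps)

lemma transpose_centered_outer: "transpose (centered_outer a) = centered_outer a"
  by (simp add: centered_outer_def transpose_diff transpose_outer H_symmetric)

lemma noise_blockm_mult:
  "noise_blockm C *v x = blockv (\<beta> *\<^sub>R (C *v (upper_block x + lower_block x)))
                                 (\<alpha> *\<^sub>R (C *v (upper_block x + lower_block x)))"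
proof -
  obtain f g where x: "x = blockv f g" using blockv_upper_lower by metis
  show ?thesis
    unfolding x noise_blockm_def blockm_mult_blockv
    by (simp add: scaleR_matrix_vector_assoc[symmetric] matrix_vector_right_distrib scaleR_right_distrib)
qed

lemma transpose_noise_blockm_mult:
  assumes "transpose C = C"
  shows "transpose (noise_blockm C) *v x
    = blockv (C *v (\<beta> *\<^sub>R upper_block x + \<alpha> *\<^sub>R lower_block x)) (C *v (\<beta> *\<^sub>R upper_block x + \<alpha> *\<^sub>R lower_block x))"
proof -
  obtain f g where x: "x = blockv f g" using blockv_upper_lower by metis
  show ?thesis
    unfolding x noise_blockm_def transpose_blockm transpose_scalar assms blockm_mult_blockv
    by (simp add: scaleR_matrix_vector_assoc[symmetric] matrix_vector_right_distrib matrix_vector_mult_scaleR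
        del: transpose_matrix_vector)
qed

lemma bounded_linear_noise_blockm: "bounded_linear noise_blockm"
proof -
  have "linear noise_blockm"
    by (rule linearI) (simp_all add: noise_blockm_def vec_eq_iff blockm_def algebra_simps split: sum.split)
  then show ?thesis by (simp add: linear_conv_bounded_linear)
qed

lemma integrable_centered_outer: "integrable \<rho> (\<lambda>z. centered_outer (fst z))"
  unfolding centered_outer_def by (intro Bochner_Integration.integrable_diff integrable_outer integrable_const)

lemma integrable_noise: "integrable \<rho> (\<lambda>z. noise_blockm (centered_outer (fst z)))"
  by (rule integrable_bounded_linear[OF bounded_linear_noise_blockm integrable_centered_outer])

lemma integral_noise: "(\<integral>z. noise_blockm (centered_outer (fst z)) \<partial>\<rho>) = 0"
proof -
  have "(\<integral>z. noise_blockm (centered_outer (fst z)) \<partial>\<rho>) = noise_blockm (\<integral>z. centered_outer (fst z) \<partial>\<rho>)"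
    by (rule integral_bounded_linear[OF bounded_linear_noise_blockm integrable_centered_outer])
  also have "(\<integral>z. centered_outer (fst z) \<partial>\<rho>) = 0"
    unfolding centered_outer_def using integrable_outer by (simp add: prob_space Hmat_def)
  finally show ?thesis by (simp add: linear_0[OF bounded_linear.linear[OF bounded_linear_noise_blockm]])
qed

lemma integrable_norm_sq_noise: "integrable \<rho> (\<lambda>z. (norm (noise_blockm (centered_outer (fst z))))^2)"
proof -
  obtain c where c: "c > 0" "\<And>C. norm (noise_blockm C) \<le> norm C * c"
    using bounded_linear.pos_bounded[OF bounded_linear_noise_blockm] by blast
  have fourth: "integrable \<rho> (\<lambda>z. (norm (fst z))^4)"
    using integrable_norm[OF integrable_norm_moment]
    by (simp add: norm_outer flip: power_add)
  have majorant: "integrable \<rho> (\<lambda>z. 2 * c^2 * (norm (fst z))^4 + 2 * c^2 * (norm H)^2)"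
    using fourth by (intro Bochner_Integration.integrable_add integrable_mult_right integrable_const) simp_all
  show ?thesis
  proof (rule Bochner_Integration.integrable_bound[OF majorant])
    show "(\<lambda>z. (norm (noise_blockm (centered_outer (fst z))))^2) \<in> borel_measurable \<rho>"
      using borel_measurable_integrable[OF integrable_noise] by measurable
    show "AE z in \<rho>. norm ((norm (noise_blockm (centered_outer (fst z))))^2)
        \<le> norm (2 * c^2 * (norm (fst z))^4 + 2 * c^2 * (norm H)^2)"
    proof (rule AE_I2)
      fix z
      have "norm (noise_blockm (centered_outer (fst z))) \<le> c * ((norm (fst z))^2 + norm H)"
        using c(2)[of "centered_outer (fst z)"] norm_triangle_ineq4[of "outer (fst z)" H] c(1)
        unfolding centered_outer_def norm_outer by (simp add: mult.commute mult_left_mono order_trans)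
      then have "(norm (noise_blockm (centered_outer (fst z))))^2 \<le> (c * ((norm (fst z))^2 + norm H))^2"
        by (simp add: power_mono)
      also have "\<dots> \<le> 2 * c^2 * (norm (fst z))^4 + 2 * c^2 * (norm H)^2"
        using sum_squares_bound[of "c * (norm (fst z))^2" "c * norm H"]
        by (simp add: power2_sum power_mult_distrib algebra_simps flip: power_mult)
      finally show "norm ((norm (noise_blockm (centered_outer (fst z))))^2)
          \<le> norm (2 * c^2 * (norm (fst z))^4 + 2 * c^2 * (norm H)^2)" by simp
    qed
  qed
qed

lemma integrable_sandwich_noise: "integrable \<rho> (\<lambda>z. sandwich (noise_blockm (centered_outer (fst z))) \<Theta>)"
  by (rule integrable_sandwich[OF borel_measurable_integrable[OF integrable_noise] integrable_norm_sq_noise])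

lemma sandwich_uminus: "sandwich (- M) \<Theta> = sandwich M \<Theta>"
  by (simp add: sandwich_def transpose_uminus vec_eq_iff matrix_matrix_mult_def sum_negf)

lemma Mop_eq: "Mop \<rho> \<alpha> \<beta> \<Theta> = (\<integral>z. sandwich (noise_blockm (centered_outer (fst z))) \<Theta> \<partial>\<rho>)"
  unfolding Mop_def Amat_eq Jmat_eq by (simp add: sandwich_def[symmetric] sandwich_uminus)

lemma MopT_eq: "MopT \<rho> \<alpha> \<beta> \<Theta> = (\<integral>z. sandwich (transpose (noise_blockm (centered_outer (fst z)))) \<Theta> \<partial>\<rho>)"
proof -
  have "transpose (- X) ** \<Theta> ** (- X) = sandwich (transpose X) \<Theta>" for X :: "real^('d+'d)^('d+'d)"
    using sandwich_uminus[of "transpose X" \<Theta>] by (simp add: sandwich_def transpose_uminus)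
  then show ?thesis unfolding MopT_def Amat_eq Jmat_eq by simp
qed

lemma centered_outer_mult: "centered_outer a *v w = (a \<bullet> w) *\<^sub>R a - H *v w"
  by (simp add: centered_outer_def matrix_vector_mult_diff_rdistrib outer_mult_vec)

lemma integral_centered_quadform:
  assumes P: "\<And>x y. (P *v x) \<bullet> y = x \<bullet> (P *v y)"
    and integrable_P: "integrable \<rho> (\<lambda>z. (fst z \<bullet> (P *v fst z)) * (fst z \<bullet> w)^2)"
  shows "integrable \<rho> (\<lambda>z. (centered_outer (fst z) *v w) \<bullet> (P *v (centered_outer (fst z) *v w)))"
    and "(\<integral>z. (centered_outer (fst z) *v w) \<bullet> (P *v (centered_outer (fst z) *v w)) \<partial>\<rho>)
      = (\<integral>z. (fst z \<bullet> (P *v fst z)) * (fst z \<bullet> w)^2 \<partial>\<rho>) - (H *v w) \<bullet> (P *v (H *v w))"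
proof -
  have expand: "(centered_outer a *v w) \<bullet> (P *v (centered_outer a *v w))
      = (a \<bullet> (P *v a)) * (a \<bullet> w)^2 - 2 * ((a \<bullet> w) * (a \<bullet> (P *v (H *v w)))) + (H *v w) \<bullet> (P *v (H *v w))"
    for a
    using P[of "H *v w" a] inner_commute[of a "P *v (H *v w)"] unfolding centered_outer_mult
    by (simp add: inner_diff_left inner_diff_right matrix_vector_mult_diff_distrib matrix_vector_mult_scaleR
        power2_eq_square algebra_simps)
  have cross: "integrable \<rho> (\<lambda>z. (fst z \<bullet> w) * (fst z \<bullet> (P *v (H *v w))))"
    by (rule integrable_inner_mult)
  have cross_integral: "(\<integral>z. (fst z \<bullet> w) * (fst z \<bullet> (P *v (H *v w))) \<partial>\<rho>) = (H *v w) \<bullet> (P *v (H *v w))"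
    using H_quadform[of w "P *v (H *v w)"] H_selfadjoint[of w "P *v (H *v w)"] by simp
  show "integrable \<rho> (\<lambda>z. (centered_outer (fst z) *v w) \<bullet> (P *v (centered_outer (fst z) *v w)))"
    unfolding expand using integrable_P cross by simp
  show "(\<integral>z. (centered_outer (fst z) *v w) \<bullet> (P *v (centered_outer (fst z) *v w)) \<partial>\<rho>)
      = (\<integral>z. (fst z \<bullet> (P *v fst z)) * (fst z \<bullet> w)^2 \<partial>\<rho>) - (H *v w) \<bullet> (P *v (H *v w))"
    unfolding expand using integrable_P cross by (simp add: cross_integral prob_space)
qed

lemma integrable_energy_noise: "integrable \<rho> (\<lambda>z. energy (centered_outer (fst z) *v w))"
  and integral_energy_noise: "(\<integral>z. energy (centered_outer (fst z) *v w) \<partial>\<rho>)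
    = \<gamma> * ((\<integral>z. (fst z \<bullet> fst z) * (fst z \<bullet> w)^2 \<partial>\<rho>) - (H *v w) \<bullet> (H *v w))
      + (\<alpha>/\<beta>) * ((\<integral>z. (fst z \<bullet> (K *v fst z)) * (fst z \<bullet> w)^2 \<partial>\<rho>) - w \<bullet> (H *v w))"
proof -
  have norm_moment: "integrable \<rho> (\<lambda>z. (fst z \<bullet> (mat 1 *v fst z)) * (fst z \<bullet> w)^2)"
    using weighted_moment_quadform(1)[OF integrable_norm_moment, of w] by (simp add: power2_norm_eq_inner)
  have K_moment: "integrable \<rho> (\<lambda>z. (fst z \<bullet> (K *v fst z)) * (fst z \<bullet> w)^2)"
    by (rule weighted_moment_quadform(1)[OF integrable_K_moment])
  note norm_part = integral_centered_quadform[of "mat 1", OF _ norm_moment, simplified]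
  note K_part = integral_centered_quadform[OF K_selfadjoint K_moment]
  show "integrable \<rho> (\<lambda>z. energy (centered_outer (fst z) *v w))"
    unfolding energy_def using norm_part(1) K_part(1) by simp
  show "(\<integral>z. energy (centered_outer (fst z) *v w) \<partial>\<rho>)
    = \<gamma> * ((\<integral>z. (fst z \<bullet> fst z) * (fst z \<bullet> w)^2 \<partial>\<rho>) - (H *v w) \<bullet> (H *v w))
      + (\<alpha>/\<beta>) * ((\<integral>z. (fst z \<bullet> (K *v fst z)) * (fst z \<bullet> w)^2 \<partial>\<rho>) - w \<bullet> (H *v w))"
    unfolding energy_def using norm_part K_part by (simp add: inner_commute)
qed

lemma integral_energy_noise_le: "(\<integral>z. energy (centered_outer (fst z) *v w) \<partial>\<rho>) \<le> w \<bullet> (H *v w)"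
proof -
  have "(\<integral>z. energy (centered_outer (fst z) *v w) \<partial>\<rho>)
      \<le> \<gamma> * (R^2 * (w \<bullet> (H *v w))) + (\<alpha>/\<beta>) * (\<kappa> * (w \<bullet> (H *v w)))"
    unfolding integral_energy_noise
  proof (intro add_mono mult_left_mono)
    show "(\<integral>z. (fst z \<bullet> fst z) * (fst z \<bullet> w)^2 \<partial>\<rho>) - (H *v w) \<bullet> (H *v w) \<le> R^2 * (w \<bullet> (H *v w))"
      using norm_moment_quadform_le[of w] inner_ge_zero[of "H *v w"] unfolding power2_norm_eq_inner
      by linarith
    show "(\<integral>z. (fst z \<bullet> (K *v fst z)) * (fst z \<bullet> w)^2 \<partial>\<rho>) - w \<bullet> (H *v w) \<le> \<kappa> * (w \<bullet> (H *v w))"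
      using K_moment_quadform_le[of w] H_psd[of w] by linarith
  qed (use \<gamma>_pos step_pos in auto)
  also have "\<dots> = (\<gamma> * R^2 + (\<alpha>/\<beta>) * \<kappa>) * (w \<bullet> (H *v w))" by (simp add: algebra_simps)
  also have "\<dots> \<le> 1 * (w \<bullet> (H *v w))"
  proof (rule mult_right_mono[OF _ H_psd])
    have "(\<alpha>/\<beta>) * \<kappa> \<le> 1/2"
      using \<alpha>_le \<kappa>_pos step_pos by (simp add: field_simps)
    then show "\<gamma> * R^2 + (\<alpha>/\<beta>) * \<kappa> \<le> 1" using \<gamma>_R2 by linarith
  qed
  finally show ?thesis by simp
qed

lemma Mop_le: "loewner_le (Mop \<rho> \<alpha> \<beta> (inv_apply (sandwich A) N)) ((2/3) *\<^sub>R N)"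
  unfolding Mop_eq
proof (rule loewner_le_integralI[where g = "\<lambda>x z. (2/3) *
    energy (centered_outer (fst z) *v (\<beta> *\<^sub>R upper_block x + \<alpha> *\<^sub>R lower_block x))"])
  show "loewner_le 0 ((2/3) *\<^sub>R N)"
    using N_psd by (simp add: loewner_le_def scaleR_matrix_vector_assoc[symmetric])
  show "x \<bullet> (sandwich (noise_blockm (centered_outer (fst z))) (inv_apply (sandwich A) N) *v x)
      \<le> (2/3) * energy (centered_outer (fst z) *v (\<beta> *\<^sub>R upper_block x + \<alpha> *\<^sub>R lower_block x))" for x z
    unfolding inner_sandwich transpose_noise_blockm_mult[OF transpose_centered_outer]
    by (rule quadform_neumann_N_le)
  show "integrable \<rho> (\<lambda>z. (2/3) *
      energy (centered_outer (fst z) *v (\<beta> *\<^sub>R upper_block x + \<alpha> *\<^sub>R lower_block x)))" for x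
    using integrable_energy_noise by simp
  show "(\<integral>z. (2/3) * energy (centered_outer (fst z) *v (\<beta> *\<^sub>R upper_block x + \<alpha> *\<^sub>R lower_block x)) \<partial>\<rho>)
      \<le> x \<bullet> (((2/3) *\<^sub>R N) *v x)" for x
    using integral_energy_noise_le by (simp add: N_quadform scaleR_matrix_vector_assoc[symmetric])
qed

lemma MopT_le: "loewner_le (MopT \<rho> \<alpha> \<beta> (inv_apply (sandwich (transpose A)) \<Upsilon>)) ((2/3) *\<^sub>R \<Upsilon>)"
  unfolding MopT_eq
proof (rule loewner_le_integralI[where g = "\<lambda>x z. (2/3) *
    energy (centered_outer (fst z) *v (upper_block x + lower_block x))"])
  show "loewner_le 0 ((2/3) *\<^sub>R \<Upsilon>)"
    using \<Upsilon>_psd by (simp add: loewner_le_def scaleR_matrix_vector_assoc[symmetric])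
  show "x \<bullet> (sandwich (transpose (noise_blockm (centered_outer (fst z)))) (inv_apply (sandwich (transpose A)) \<Upsilon>) *v x)
      \<le> (2/3) * energy (centered_outer (fst z) *v (upper_block x + lower_block x))" for x z
    unfolding inner_sandwich transpose_transpose noise_blockm_mult
    by (rule quadform_neumann_\<Upsilon>_le)
  show "integrable \<rho> (\<lambda>z. (2/3) * energy (centered_outer (fst z) *v (upper_block x + lower_block x)))" for x
    using integrable_energy_noise by simp
  show "(\<integral>z. (2/3) * energy (centered_outer (fst z) *v (upper_block x + lower_block x)) \<partial>\<rho>)
      \<le> x \<bullet> (((2/3) *\<^sub>R \<Upsilon>) *v x)" for x
    using integral_energy_noise_le by (simp add: \<Upsilon>_quadform scaleR_matrix_vector_assoc[symmetric])
qed

text \<open>Since \<open>E J = A\<close>, the cross terms of \<open>J \<Theta> J\<^sup>T = (A + (J - A)) \<Theta> (A + (J - A))\<^sup>T\<close> vanish in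
  expectation.\<close>

lemma Top_eq: "Top \<rho> \<alpha> \<beta> \<Theta> = sandwich A \<Theta> + Mop \<rho> \<alpha> \<beta> \<Theta>"
proof -
  define E where "E z = - noise_blockm (centered_outer (fst z))" for z :: "(real^'d) \<times> real"
  define cross where "cross X = A ** \<Theta> ** transpose X + X ** \<Theta> ** transpose A" for X
  have "linear cross"
    unfolding cross_def
    by (rule linearI) (simp_all add: transpose_add transpose_scalar matrix_add_ldistrib matrix_add_rdistrib
        matrix_scalar_ac scalar_matrix_assoc algebra_simps)
  then have cross: "bounded_linear cross" by (simp add: linear_conv_bounded_linear)
  have integrable_E: "integrable \<rho> E"
    unfolding E_def using integrable_noise by simp
  have "(\<integral>z. cross (E z) \<partial>\<rho>) = cross (\<integral>z. E z \<partial>\<rho>)"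
    by (rule integral_bounded_linear[OF cross integrable_E])
  also have "\<dots> = 0"
    unfolding E_def using integral_noise linear_0[OF \<open>linear cross\<close>] by simp
  finally have cross_integral: "(\<integral>z. cross (E z) \<partial>\<rho>) = 0" .
  have split: "Jmat \<alpha> \<beta> (fst z) ** \<Theta> ** transpose (Jmat \<alpha> \<beta> (fst z))
      = sandwich A \<Theta> + cross (E z) + sandwich (E z) \<Theta>" for z
  proof -
    have "sandwich (A + X) \<Theta> = sandwich A \<Theta> + cross X + sandwich X \<Theta>" for X
      unfolding sandwich_def cross_def transpose_add matrix_add_ldistrib matrix_add_rdistrib by (simp add: add_ac)
    from this[of "E z"] show ?thesis unfolding E_def sandwich_def Jmat_eq by simp
  qed
  have "Top \<rho> \<alpha> \<beta> \<Theta> = sandwich A \<Theta> + (\<integral>z. cross (E z) \<partial>\<rho>) + (\<integral>z. sandwich (E z) \<Theta> \<partial>\<rho>)"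
    unfolding Top_def split
    using integrable_bounded_linear[OF cross integrable_E] integrable_sandwich_noise
    by (simp add: E_def sandwich_uminus prob_space)
  then show ?thesis unfolding cross_integral by (simp add: Mop_eq E_def sandwich_uminus)
qed

lemma linear_Mop: "linear (Mop \<rho> \<alpha> \<beta>)"
proof (rule linearI)
  show "Mop \<rho> \<alpha> \<beta> (X + Y) = Mop \<rho> \<alpha> \<beta> X + Mop \<rho> \<alpha> \<beta> Y" for X Y
    unfolding Mop_eq linear_add[OF linear_sandwich]
    by (rule Bochner_Integration.integral_add[OF integrable_sandwich_noise integrable_sandwich_noise])
  show "Mop \<rho> \<alpha> \<beta> (c *\<^sub>R X) = c *\<^sub>R Mop \<rho> \<alpha> \<beta> X" for c X
    unfolding Mop_eq linear_scale[OF linear_sandwich] by simp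
qed

lemma linear_Top: "linear (Top \<rho> \<alpha> \<beta>)"
  unfolding Top_eq[abs_def] by (intro linear_compose_add linear_sandwich linear_Mop)

lemma psd_Top: "loewner_le 0 \<Theta> \<Longrightarrow> loewner_le 0 (Top \<rho> \<alpha> \<beta> \<Theta>)"
  using psd_integral_sandwich[OF integrable_sandwich_noise]
  unfolding Top_eq Mop_eq loewner_le_def
  by (simp add: matrix_vector_mult_add_rdistrib inner_add_right inner_sandwich add_nonneg_nonneg)

lemma symmetric_Top: "transpose \<Theta> = \<Theta> \<Longrightarrow> transpose (Top \<rho> \<alpha> \<beta> \<Theta>) = Top \<rho> \<alpha> \<beta> \<Theta>"
  unfolding Top_eq Mop_eq
  by (simp add: transpose_add transpose_sandwich symmetric_integral_sandwich[OF integrable_sandwich_noise])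

lemma inv_on_exists_Top_N: "inv_on_exists (Top \<rho> \<alpha> \<beta>) N"
proof -
  define Y where "Y = inv_apply (sandwich A) N"
  have Y: "Y = N + sandwich A Y"
    unfolding Y_def using inv_exists_sandwich_A(1) linear_sandwich
    by (intro inv_apply_unfold) (simp_all add: linear_conv_bounded_linear inv_exists_def inv_on_exists_def)
  have Y_psd: "loewner_le 0 Y"
    unfolding Y_def using inv_exists_sandwich_A(1) N_psd
    by (intro psd_inv_apply) (simp_all add: inv_exists_def inv_on_exists_def loewner_le_def inner_sandwich_iter)
  have "loewner_le (Top \<rho> \<alpha> \<beta> (3 *\<^sub>R Y) + N) (3 *\<^sub>R Y)"
    unfolding loewner_le_def
  proof
    fix x
    have "x \<bullet> (Mop \<rho> \<alpha> \<beta> Y *v x) \<le> (2/3) * (x \<bullet> (N *v x))"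
      using Mop_le unfolding Y_def loewner_le_def by (simp add: scaleR_matrix_vector_assoc[symmetric])
    moreover have "x \<bullet> (sandwich A Y *v x) = x \<bullet> (Y *v x) - x \<bullet> (N *v x)"
      using arg_cong[OF Y, of "\<lambda>M. x \<bullet> (M *v x)"] by (simp add: matrix_vector_mult_add_rdistrib inner_add_right)
    moreover have "Top \<rho> \<alpha> \<beta> (3 *\<^sub>R Y) = 3 *\<^sub>R (sandwich A Y + Mop \<rho> \<alpha> \<beta> Y)"
      using linear_scale[OF linear_Top] unfolding Top_eq by blast
    ultimately show "x \<bullet> ((Top \<rho> \<alpha> \<beta> (3 *\<^sub>R Y) + N) *v x) \<le> x \<bullet> ((3 *\<^sub>R Y) *v x)"
      by (simp add: matrix_vector_mult_add_rdistrib inner_add_right scaleR_matrix_vector_assoc[symmetric])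
  qed
  moreover have "loewner_le 0 (3 *\<^sub>R Y)"
    using Y_psd by (simp add: loewner_le_def scaleR_matrix_vector_assoc[symmetric])
  ultimately show ?thesis
    unfolding inv_on_exists_def
    by (intro summable_neumann_supersolution[OF linear_Top psd_Top symmetric_Top N_symmetric N_psd])
qed

end

theorem lemma12:
  fixes \<rho> :: "((real^'d) \<times> real) measure"
    and L R \<kappa> \<alpha> \<beta> :: real
  assumes "prob_space \<rho>"
    and "sets \<rho> = sets borel"
    and "integrable \<rho> (\<lambda>z. (norm (fst z))^2)"
    and "invertible (Hmat \<rho>)"
    and "\<exists>v. v \<noteq> 0 \<and> Hmat \<rho> *v v = L *\<^sub>R v"
    and "\<forall>\<mu> v. v \<noteq> 0 \<and> Hmat \<rho> *v v = \<mu> *\<^sub>R v \<longrightarrow> \<mu> \<le> L"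
    and "integrable \<rho> (\<lambda>z. (norm (fst z))^2 *\<^sub>R outer (fst z))"
    and "loewner_le (integral\<^sup>L \<rho> (\<lambda>z. (norm (fst z))^2 *\<^sub>R outer (fst z))) (R^2 *\<^sub>R Hmat \<rho>)"
    and "integrable \<rho> (\<lambda>z. (fst z \<bullet> (matrix_inv (Hmat \<rho>) *v fst z)) *\<^sub>R outer (fst z))"
    and "loewner_le (integral\<^sup>L \<rho> (\<lambda>z. (fst z \<bullet> (matrix_inv (Hmat \<rho>) *v fst z)) *\<^sub>R outer (fst z)))
           (\<kappa> *\<^sub>R Hmat \<rho>)"
    and "\<alpha> > 0" and "\<beta> > 0"
    and "(\<alpha> + 2*\<beta>) * R^2 \<le> 1"
    and "\<alpha> \<le> \<beta> / (2*\<kappa>)"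
  shows "((\<alpha> < 1/L \<and> \<beta> < 1/L) \<longrightarrow> inv_exists (Ttil \<rho> \<alpha> \<beta>))
    \<and> (inv_on_exists (Ttil \<rho> \<alpha> \<beta>) (Nmat \<rho> \<alpha> \<beta>)
       \<and> loewner_le (Mop \<rho> \<alpha> \<beta> (inv_apply (Ttil \<rho> \<alpha> \<beta>) (Nmat \<rho> \<alpha> \<beta>)))
                    ((2/3) *\<^sub>R Nmat \<rho> \<alpha> \<beta>)
       \<and> inv_on_exists (Top \<rho> \<alpha> \<beta>) (Nmat \<rho> \<alpha> \<beta>))
    \<and> (inv_on_exists (TtilT \<rho> \<alpha> \<beta>) (Upsilon \<rho>)
       \<and> loewner_le (MopT \<rho> \<alpha> \<beta> (inv_apply (TtilT \<rho> \<alpha> \<beta>) (Upsilon \<rho>)))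
                    ((2/3) *\<^sub>R Upsilon \<rho>))"
proof -
  interpret least_squares_setting \<rho> R \<kappa> \<alpha> \<beta>
    using assms(1,4,7-14) by (simp add: least_squares_setting_def least_squares_setting_axioms_def)
  show ?thesis
    using inv_exists_sandwich_A Mop_le MopT_le inv_on_exists_Top_N
    unfolding Ttil_eq TtilT_eq Nmat_eq Upsilon_eq inv_exists_def inv_on_exists_def by auto
qed

end
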